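(* Let $\mathcal H=(H=A\oplus B,(\cdot,\cdot),x\mapsto x^*,U)$ be a structure algebra. For $a\in A$ let $\phi(a)\in B$ be the unique element with $(\phi(a),b)=(a,b)$ for all $b\in B$. Then $\phi:A\to B$ is an algebra homomorphism from $A$ into the center of $B$, and $ab=\phi(a)b$ for all $a\in A$, $b\in B$.
   Context: All vector spaces are finite-dimensional over $\mathbb C$. For an associative algebra $X$ with a symmetric invariant ($(xy,z)=(x,yz)$) bilinear form nondegenerate on $X$, basis $(e_i)$, Gram matrix $F_{ij}=(e_i,e_j)$ with inverse $(F^{ij})$, put $K_X=\sum F^{ij}e_ie_j$, $V_{K_X}(x)=\sum F^{ij}e_ixe_j$, and for an involutive antiautomorphism $*$ ($(x^* )^*=x$, $(xy)^*=y^*x^*$), $K_{X,*}=\sum F^{ij}e_ie_j^*$. A structure algebra is a tuple $(H=A\oplus B,(\cdot,\cdot),x\mapsto x^*,U)$ where $H$ is a finite-dimensional associative algebra, $H=A\oplus B$ is a decomposition into vector subspaces, $(\cdot,\cdot)$ is a symmetric invariant bilinear form on $H$, $*$ is an involutive antiautomorphism of $H$ and $U\in A$, such that: (1) $A$ is a subalgebra contained in the center of $H$ and its unit $1_A$ is the unit of $H$; (2) $B$ is a two-sided ideal with a unit $1_B$; (3) the restrictions of $(\cdot,\cdot)$ to $A$ and to $B$ are nondegenerate; (4) $(V_{K_B}(b_1),b_2)=\sum_{i,j}F^{ij}(e_i,b_1)(e_j,b_2)$ for all $b_1,b_2\in B$, where $(e_i)$ is a basis of $A$ and $F^{ij}$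 the inverse Gram matrix of $(\cdot,\cdot)|_A$; (5) $A^*=A$, $B^*=B$, $(x^*,y^* )=(x,y)$; (6) $U^2=K_{A,*}$; (7) $(U,b)=(K_{B,*},b)$ for all $b\in B$; (8) $(aU)^*=aU$ for all $a\in A$. (All of $K_A,K_{A,*},V_{K_B},K_{B,*}$ are computed inside $A$ or $B$ with the restricted form and involution.) *)

theory Defs
  imports Complex_Main
begin

definition cx_algebra :: "(complex \<Rightarrow> 'h::ring_1 \<Rightarrow> 'h) \<Rightarrow> bool" where
  "cx_algebra sc \<longleftrightarrow> vector_space sc
     \<and> (\<forall>c x y. sc c (x * y) = sc c x * y \<and> sc c (x * y) = x * sc c y)
     \<and> (\<exists>S. finite S \<and> module.span sc S = UNIV)"

definition is_basis_list :: "(complex \<Rightarrow> 'h::ring_1 \<Rightarrow> 'h) \<Rightarrow> 'h set \<Rightarrow> 'h list \<Rightarrow> bool" where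
  "is_basis_list sc X es \<longleftrightarrow> distinct es \<and> \<not> module.dependent sc (set es)
     \<and> module.span sc (set es) = X"

definition inv_gram :: "('h \<Rightarrow> 'h \<Rightarrow> complex) \<Rightarrow> 'h list \<Rightarrow> (nat \<Rightarrow> nat \<Rightarrow> complex) \<Rightarrow> bool" where
  "inv_gram form es G \<longleftrightarrow>
     (\<forall>i<length es. \<forall>j<length es.
        (\<Sum>k<length es. form (es!i) (es!k) * G k j) = (if i = j then 1 else 0))"

text \<open>Generic sum  sum_{i,j} g (F^{ij}) e_i e_j  over a basis of X
  (independent of the choice of basis).\<close>
definition gram_sum :: "(complex \<Rightarrow> 'h::ring_1 \<Rightarrow> 'h) \<Rightarrow> ('h \<Rightarrow> 'h \<Rightarrow> complex) \<Rightarrow> 'h set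
     \<Rightarrow> (complex \<Rightarrow> 'h \<Rightarrow> 'h \<Rightarrow> 'v::comm_monoid_add) \<Rightarrow> 'v" where
  "gram_sum sc form X g = (SOME s. \<exists>es G. is_basis_list sc X es \<and> inv_gram form es G
      \<and> s = (\<Sum>i<length es. \<Sum>j<length es. g (G i j) (es!i) (es!j)))"

definition K_elt :: "(complex \<Rightarrow> 'h::ring_1 \<Rightarrow> 'h) \<Rightarrow> ('h \<Rightarrow> 'h \<Rightarrow> complex) \<Rightarrow> 'h set \<Rightarrow> 'h" where
  "K_elt sc form X = gram_sum sc form X (\<lambda>c u v. sc c (u * v))"

definition V_K :: "(complex \<Rightarrow> 'h::ring_1 \<Rightarrow> 'h) \<Rightarrow> ('h \<Rightarrow> 'h \<Rightarrow> complex) \<Rightarrow> 'h set \<Rightarrow> 'h \<Rightarrow> 'h" where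
  "V_K sc form X x = gram_sum sc form X (\<lambda>c u v. sc c (u * x * v))"

definition K_star :: "(complex \<Rightarrow> 'h::ring_1 \<Rightarrow> 'h) \<Rightarrow> ('h \<Rightarrow> 'h \<Rightarrow> complex) \<Rightarrow> ('h \<Rightarrow> 'h)
     \<Rightarrow> 'h set \<Rightarrow> 'h" where
  "K_star sc form st X = gram_sum sc form X (\<lambda>c u v. sc c (u * st v))"

definition nondeg_on :: "('h::zero \<Rightarrow> 'h \<Rightarrow> complex) \<Rightarrow> 'h set \<Rightarrow> bool" where
  "nondeg_on form X \<longleftrightarrow> (\<forall>x\<in>X. (\<forall>y\<in>X. form x y = 0) \<longrightarrow> x = 0)"

definition structure_algebra ::
  "(complex \<Rightarrow> 'h::ring_1 \<Rightarrow> 'h) \<Rightarrow> 'h set \<Rightarrow> 'h set \<Rightarrow> ('h \<Rightarrow> 'h \<Rightarrow> complex)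
     \<Rightarrow> ('h \<Rightarrow> 'h) \<Rightarrow> 'h \<Rightarrow> bool" where
  "structure_algebra sc A B form st U \<longleftrightarrow>
     cx_algebra sc
     \<comment> \<open>H = A + B as a direct sum of subspaces\<close>
     \<and> module.subspace sc A \<and> module.subspace sc B
     \<and> (\<forall>x. \<exists>a\<in>A. \<exists>b\<in>B. x = a + b) \<and> A \<inter> B = {0}
     \<comment> \<open>symmetric invariant bilinear form\<close>
     \<and> (\<forall>x y z. form (x + y) z = form x z + form y z)
     \<and> (\<forall>c x y. form (sc c x) y = c * form x y)
     \<and> (\<forall>x y. form x y = form y x)
     \<and> (\<forall>x y z. form (x * y) z = form x (y * z))
     \<comment> \<open>involutive (complex-linear) antiautomorphism\<close>
     \<and> (\<forall>x y. st (x + y) = st x + st y) \<and> (\<forall>c x. st (sc c x) = sc c (st x))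
     \<and> (\<forall>x y. st (x * y) = st y * st x) \<and> (\<forall>x. st (st x) = x)
     \<and> U \<in> A
     \<comment> \<open>(1)\<close>
     \<and> (\<forall>x\<in>A. \<forall>y\<in>A. x * y \<in> A) \<and> 1 \<in> A \<and> (\<forall>a\<in>A. \<forall>x. a * x = x * a)
     \<comment> \<open>(2)\<close>
     \<and> (\<forall>b\<in>B. \<forall>x. x * b \<in> B \<and> b * x \<in> B)
     \<and> (\<exists>e\<in>B. \<forall>b\<in>B. e * b = b \<and> b * e = b)
     \<comment> \<open>(3)\<close>
     \<and> nondeg_on form A \<and> nondeg_on form B
     \<comment> \<open>(4)\<close>
     \<and> (\<forall>b1\<in>B. \<forall>b2\<in>B. form (V_K sc form B b1) b2
          = gram_sum sc form A (\<lambda>c u v. c * form u b1 * form v b2))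
     \<comment> \<open>(5)\<close>
     \<and> st ` A = A \<and> st ` B = B \<and> (\<forall>x y. form (st x) (st y) = form x y)
     \<comment> \<open>(6)\<close>
     \<and> U * U = K_star sc form st A
     \<comment> \<open>(7)\<close>
     \<and> (\<forall>b\<in>B. form U b = form (K_star sc form st B) b)
     \<comment> \<open>(8)\<close>
     \<and> (\<forall>a\<in>A. st (a * U) = a * U)"

end

theory Submission
  imports Defs
begin

text \<open>The unit \<open>e\<close> of the ideal \<open>B\<close> does all the work: by invariance,
  \<open>(a e, b) = (a, e b) = (a, b)\<close> for \<open>b \<in> B\<close>, so \<open>\<phi> a = a e\<close> by nondegeneracy on \<open>B\<close>.
  Multiplicativity, centrality and \<open>a b = \<phi>(a) b\<close> are then identities in the ring,
  using that \<open>a\<close> is central and \<open>e\<close> is an idempotent acting trivially on \<open>B\<close>.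
  Only axioms (1)--(3) of a structure algebra are needed.\<close>

lemma nondeg_on_eqI:
  fixes form :: "'h::group_add \<Rightarrow> 'h \<Rightarrow> complex"
  assumes "nondeg_on form X"
    and form_add: "\<And>x y z. form (x + y) z = form x z + form y z"
    and diff_closed: "x - y \<in> X"
    and form_eq: "\<And>z. z \<in> X \<Longrightarrow> form x z = form y z"
  shows "x = y"
proof -
  have form_diff: "form (x - y) z = form x z - form y z" for z
    using form_add[of "x - y" y z] by (simp add: algebra_simps)
  have "\<forall>z\<in>X. form (x - y) z = 0"
    using form_eq by (simp add: form_diff)
  then have "x - y = 0"
    using assms(1) diff_closed unfolding nondeg_on_def by blast
  then show ?thesis by simp
qed

lemma
  assumes "structure_algebra sc A B form st U"
  shows structure_algebra_cx_algebra: "cx_algebra sc"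
    and structure_algebra_subspace_B: "module.subspace sc B"
    and structure_algebra_form_add [rule_format]: "\<forall>x y z. form (x + y) z = form x z + form y z"
    and structure_algebra_form_invariant [rule_format]: "\<forall>x y z. form (x * y) z = form x (y * z)"
    and structure_algebra_central [rule_format]: "\<forall>a\<in>A. \<forall>x. a * x = x * a"
    and structure_algebra_ideal [rule_format]: "\<forall>b\<in>B. \<forall>x. x * b \<in> B \<and> b * x \<in> B"
    and structure_algebra_unit_B: "\<exists>e\<in>B. \<forall>b\<in>B. e * b = b \<and> b * e = b"
    and structure_algebra_nondeg_B: "nondeg_on form B"
proof -
  note S = assms[unfolded structure_algebra_def]
  show "cx_algebra sc" using S by (elim conjE)
  show "module.subspace sc B" using S by (elim conjE)
  show "\<forall>x y z. form (x + y) z = form x z + form y z" using S by (elim conjE)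
  show "\<forall>x y z. form (x * y) z = form x (y * z)" using S by (elim conjE)
  show "\<forall>a\<in>A. \<forall>x. a * x = x * a" using S by (elim conjE)
  show "\<forall>b\<in>B. \<forall>x. x * b \<in> B \<and> b * x \<in> B" using S by (elim conjE)
  show "\<exists>e\<in>B. \<forall>b\<in>B. e * b = b \<and> b * e = b" using S by (elim conjE)
  show "nondeg_on form B" using S by (elim conjE)
qed

lemma structure_algebra_representative_iff:
  assumes SA: "structure_algebra sc A B form st U"
    and "e \<in> B" and unit: "\<And>y. y \<in> B \<Longrightarrow> e * y = y"
  shows "b \<in> B \<and> (\<forall>y\<in>B. form b y = form x y) \<longleftrightarrow> b = x * e"
proof -
  have "module sc"
    using structure_algebra_cx_algebra[OF SA]
    unfolding cx_algebra_def vector_space_def module_def by blast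
  then have diff_closed: "y1 - y2 \<in> B" if "y1 \<in> B" "y2 \<in> B" for y1 y2
    using structure_algebra_subspace_B[OF SA] that by (rule module.subspace_diff)
  have "x * e \<in> B"
    using structure_algebra_ideal[OF SA \<open>e \<in> B\<close>] by blast
  moreover have represents: "form (x * e) y = form x y" if "y \<in> B" for y
    using structure_algebra_form_invariant[OF SA, of x e y] unit[OF that] by simp
  moreover have "b = x * e" if "b \<in> B" and b_represents: "\<forall>y\<in>B. form b y = form x y"
  proof (rule nondeg_on_eqI)
    show "nondeg_on form B" "form (u + v) w = form u w + form v w" for u v w
      using structure_algebra_nondeg_B[OF SA] structure_algebra_form_add[OF SA] by blast+
    show "b - x * e \<in> B"
      using diff_closed[OF \<open>b \<in> B\<close> \<open>x * e \<in> B\<close>] .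
    show "form b y = form (x * e) y" if "y \<in> B" for y
      using b_represents represents that by simp
  qed
  ultimately show ?thesis by blast
qed

lemma mult_idem_right_multiplicative:
  fixes e :: "'a::semigroup_mult"
  assumes "e * e = e" and "a2 * e = e * a2"
  shows "a1 * a2 * e = a1 * e * (a2 * e)"
  by (metis assms mult.assoc)

lemma mult_unit_commute:
  fixes e :: "'a::semigroup_mult"
  assumes "a * b = b * a" and "e * b = b" and "b * e = b"
  shows "a * e * b = b * (a * e)"
  by (metis assms mult.assoc)

theorem lemma2p1:
  fixes sc :: "complex \<Rightarrow> 'h::ring_1 \<Rightarrow> 'h"
    and A B :: "'h set" and form :: "'h \<Rightarrow> 'h \<Rightarrow> complex"
    and st :: "'h \<Rightarrow> 'h" and U :: 'h and \<phi> :: "'h \<Rightarrow> 'h"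
  assumes "structure_algebra sc A B form st U"
    and "\<phi> = (\<lambda>a. THE b. b \<in> B \<and> (\<forall>b'\<in>B. form b b' = form a b'))"
  shows "(\<forall>a\<in>A. \<exists>!b. b \<in> B \<and> (\<forall>b'\<in>B. form b b' = form a b'))
    \<and> (\<forall>a\<in>A. \<phi> a \<in> B \<and> (\<forall>b\<in>B. form (\<phi> a) b = form a b))
    \<and> (\<forall>a1\<in>A. \<forall>a2\<in>A. \<phi> (a1 + a2) = \<phi> a1 + \<phi> a2)
    \<and> (\<forall>c. \<forall>a\<in>A. \<phi> (sc c a) = sc c (\<phi> a))
    \<and> (\<forall>a1\<in>A. \<forall>a2\<in>A. \<phi> (a1 * a2) = \<phi> a1 * \<phi> a2)
    \<and> (\<forall>a\<in>A. \<forall>b\<in>B. \<phi> a * b = b * \<phi> a)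
    \<and> (\<forall>a\<in>A. \<forall>b\<in>B. a * b = \<phi> a * b)"
proof -
  obtain e where "e \<in> B"
    and unit: "\<And>b. b \<in> B \<Longrightarrow> e * b = b" "\<And>b. b \<in> B \<Longrightarrow> b * e = b"
    using structure_algebra_unit_B[OF assms(1)] by blast
  have representative: "b \<in> B \<and> (\<forall>y\<in>B. form b y = form x y) \<longleftrightarrow> b = x * e" for b x
    using structure_algebra_representative_iff[OF assms(1) \<open>e \<in> B\<close> unit(1)] .
  have phi: "\<phi> a = a * e" for a
    unfolding assms(2) representative by simp
  note central = structure_algebra_central[OF assms(1)]
  show ?thesis
    unfolding phi
  proof (intro conjI ballI allI)
    show "\<exists>!b. b \<in> B \<and> (\<forall>y\<in>B. form b y = form a y)" for a
      by (simp add: representative)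
    show "a * e \<in> B" for a
      using representative[of "a * e" a] by blast
    show "form (a * e) b = form a b" if "b \<in> B" for a b
      using representative[of "a * e" a] that by blast
    show "(a1 + a2) * e = a1 * e + a2 * e" for a1 a2
      by (rule distrib_right)
    show "sc c a * e = sc c (a * e)" for c a
      using structure_algebra_cx_algebra[OF assms(1)] unfolding cx_algebra_def by simp
    show "a1 * a2 * e = a1 * e * (a2 * e)" if "a2 \<in> A" for a1 a2
      using unit(1)[OF \<open>e \<in> B\<close>] central[OF that] by (rule mult_idem_right_multiplicative)
    show "a * e * b = b * (a * e)" if "a \<in> A" "b \<in> B" for a b
      using central[OF that(1)] unit[OF that(2)] by (rule mult_unit_commute)
    show "a * b = a * e * b" if "b \<in> B" for a b
      using unit(1)[OF that] by (simp add: mult.assoc)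
  qed
qed

end
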